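(* Let $\theta,\phi\in\mathcal{T}\subset\mathbb{R}^L$, where $\mathcal{T}$ is a bounded set of signals. Then for $\sigma$ bigger than a threshold $\sigma_0(L)$ and $\varrho(\theta,\phi)$ small enough, we have $D_{KL}(p_\theta\|p_\phi)\ge C\sigma^{-4}\|\Delta_2(\theta,\phi)\|_F^2$ for a positive constant $C$.
   Context: Vectors are functions on $\mathbb{Z}_L$; $\mathcal{G}$ is the group of cyclic shifts $(g\cdot\theta)(i)=\theta(i+g)$, and $G$ is uniform on $\mathcal{G}$. $p_\theta(y)=\frac1L\sum_{R\in\mathcal{G}}(2\pi\sigma^2)^{-L/2}e^{-\|y-R\theta\|^2/(2\sigma^2)}$ is the MRA observation density with noise level $\sigma>0$; $D_{KL}$ is the Kullback–Leibler divergence. $\Delta_2(\theta,\phi)=\mathbb{E}_G[(G\theta)^{\otimes2}]-\mathbb{E}_G[(G\phi)^{\otimes2}]$, $\|\cdot\|_F$ the Frobenius norm. $\varrho(\theta,\phi)=\frac1{\sqrt L}\min_g\|\theta-g\cdot\phi\|_2$. *)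

theory Defs
  imports "HOL-Analysis.Analysis" "HOL-Probability.Probability"
begin

text \<open>Signals in R^L are functions nat => real, only indices 0..L-1 matter
  (identified with Z_L). Observation space: PiM {..<L} (\<lambda>_. lborel).\<close>

definition shift :: "nat \<Rightarrow> nat \<Rightarrow> (nat \<Rightarrow> real) \<Rightarrow> (nat \<Rightarrow> real)" where
  "shift L g \<theta> = restrict (\<lambda>i. \<theta> ((i + g) mod L)) {..<L}"

definition sqnorm :: "nat \<Rightarrow> (nat \<Rightarrow> real) \<Rightarrow> real" where
  "sqnorm L x = (\<Sum>i<L. (x i)\<^sup>2)"

definition obs_space :: "nat \<Rightarrow> (nat \<Rightarrow> real) measure" where
  "obs_space L = PiM {..<L} (\<lambda>_. lborel)"

definition mra_density :: "nat \<Rightarrow> real \<Rightarrow> (nat \<Rightarrow> real) \<Rightarrow> (nat \<Rightarrow> real) \<Rightarrow> real" where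
  "mra_density L \<sigma> \<theta> y = (1 / real L) * (\<Sum>g<L.
      (2 * pi * \<sigma>\<^sup>2) powr (- real L / 2) *
      exp (- (\<Sum>i<L. (y i - shift L g \<theta> i)\<^sup>2) / (2 * \<sigma>\<^sup>2)))"

definition KL_mra :: "nat \<Rightarrow> real \<Rightarrow> (nat \<Rightarrow> real) \<Rightarrow> (nat \<Rightarrow> real) \<Rightarrow> real" where
  "KL_mra L \<sigma> \<theta> \<phi> = (\<integral>y. mra_density L \<sigma> \<theta> y *
       ln (mra_density L \<sigma> \<theta> y / mra_density L \<sigma> \<phi> y) \<partial>obs_space L)"

definition moment2 :: "nat \<Rightarrow> (nat \<Rightarrow> real) \<Rightarrow> nat \<Rightarrow> nat \<Rightarrow> real" where
  "moment2 L \<theta> i j = (1 / real L) * (\<Sum>g<L. shift L g \<theta> i * shift L g \<theta> j)"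

definition frob2_Delta2 :: "nat \<Rightarrow> (nat \<Rightarrow> real) \<Rightarrow> (nat \<Rightarrow> real) \<Rightarrow> real" where
  "frob2_Delta2 L \<theta> \<phi> = (\<Sum>i<L. \<Sum>j<L. (moment2 L \<theta> i j - moment2 L \<phi> i j)\<^sup>2)"

definition rho :: "nat \<Rightarrow> (nat \<Rightarrow> real) \<Rightarrow> (nat \<Rightarrow> real) \<Rightarrow> real" where
  "rho L \<theta> \<phi> = (1 / sqrt (real L)) *
     Min ((\<lambda>g. sqrt (\<Sum>i<L. (\<theta> i - shift L g \<phi> i)\<^sup>2)) ` {..<L})"

end

theory Submission
  imports Defs
begin

(* Pointwise, p ln (p / q) \<ge> p f + p - q exp f for every real f (the integrand of the
   Donsker--Varadhan formula); with f = min u 1 this gives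
   p ln (p / q) \<ge> p (u - u\<^sup>2) + p - q (1 + u + u\<^sup>2).
   Choose u = \<lambda> \<langle>\<Delta>\<^sub>2, y \<otimes> y\<rangle>.  The second moment of p\<^sub>\<theta> is
   E\<^sub>G[(G\<theta>)\<^sup>\<otimes>\<^sup>2] + \<sigma>\<^sup>2 I, so the \<sigma>\<^sup>2 terms cancel and integrating yields
   KL \<ge> \<lambda> \<parallel>\<Delta>\<^sub>2\<parallel>\<^sup>2 - \<lambda>\<^sup>2 \<parallel>\<Delta>\<^sub>2\<parallel>\<^sup>2 L \<integral> (p\<^sub>\<theta> + p\<^sub>\<phi>) \<Sum>\<^sub>i y\<^sub>i\<^sup>4
   by Cauchy--Schwarz.  For \<parallel>\<theta>\<parallel>\<^sup>2, \<parallel>\<phi>\<parallel>\<^sup>2 \<le> B and \<sigma> \<ge> 1 each fourth moment is at most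
   (B\<^sup>2 + 6B + 3) \<sigma>\<^sup>4, and \<lambda> of order \<sigma>\<^sup>-\<^sup>4 gives the bound, with no condition on \<rho>.
   Integrability of p\<^sub>\<theta> ln (p\<^sub>\<theta> / p\<^sub>\<phi>) follows from comparing Gaussian components:
   |ln (p\<^sub>\<theta> / p\<^sub>\<phi>)| \<le> (\<parallel>y\<parallel>\<^sup>2 + 5LB) / (2\<sigma>\<^sup>2). *)

lemma normal_moment_nz_0:
  "0 < s \<Longrightarrow> has_bochner_integral lborel (\<lambda>z. normal_density m s z * 1) 1"
  using normal_moment_even[of s m 0] by simp

lemma normal_moment_nz_2:
  fixes m s :: real assumes "0 < s"
  shows "has_bochner_integral lborel (\<lambda>z. normal_density m s z * z^2) (m^2 + s^2)"
proof -
  have "has_bochner_integral lborel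
      (\<lambda>z. normal_density m s z * (z - m)^2 + (2*m) * (normal_density m s z * (z - m))
         + m^2 * normal_density m s z) (s^2 + (2*m) * 0 + m^2 * 1)"
    using normal_moment_even[OF assms, of m 1] normal_moment_odd[OF assms, of m 0]
      normal_moment_even[OF assms, of m 0]
    by (intro has_bochner_integral_add has_bochner_integral_mult_right) (simp_all add: power2_eq_square)
  then show ?thesis
    by (rule has_bochner_integral_cong[THEN iffD1, rotated -1]) (auto simp: power2_eq_square algebra_simps)
qed

lemma normal_moment_nz_4:
  fixes m s :: real assumes "0 < s"
  shows "has_bochner_integral lborel (\<lambda>z. normal_density m s z * z^4) (m^4 + 6 * m^2 * s^2 + 3 * s^4)"
proof -
  have "has_bochner_integral lborel
      (\<lambda>z. normal_density m s z * (z - m)^4 + (4*m) * (normal_density m s z * (z - m)^3)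
         + (6*m^2) * (normal_density m s z * (z - m)^2)
         + (4*m^3) * (normal_density m s z * (z - m)) + m^4 * normal_density m s z)
      (3 * s^4 + (4*m) * 0 + (6*m^2) * s^2 + (4*m^3) * 0 + m^4 * 1)"
    using normal_moment_even[OF assms, of m 2] normal_moment_odd[OF assms, of m 1]
      normal_moment_even[OF assms, of m 1] normal_moment_odd[OF assms, of m 0]
      normal_moment_even[OF assms, of m 0]
    by (intro has_bochner_integral_add has_bochner_integral_mult_right)
       (simp_all add: eval_nat_numeral field_simps)
  then show ?thesis
    by (rule has_bochner_integral_cong[THEN iffD1, rotated -1]) (auto simp: eval_nat_numeral algebra_simps)
qed

definition normal_prod_density :: "nat \<Rightarrow> real \<Rightarrow> (nat \<Rightarrow> real) \<Rightarrow> (nat \<Rightarrow> real) \<Rightarrow> real" where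
  "normal_prod_density L s a y = (\<Prod>k<L. normal_density (a k) s (y k))"

lemma normal_prod_density_eq:
  assumes "0 < s"
  shows "normal_prod_density L s a y =
    (2 * pi * s^2) powr (- real L / 2) * exp (- (\<Sum>i<L. (y i - a i)^2) / (2 * s^2))"
proof -
  have "normal_prod_density L s a y
      = (\<Prod>k<L. (1 / sqrt (2 * pi * s^2)) * exp (- ((y k - a k)^2) / (2 * s^2)))"
    by (simp add: normal_prod_density_def normal_density_def)
  also have "\<dots> = (1 / sqrt (2 * pi * s^2)) ^ L * exp (\<Sum>k<L. - ((y k - a k)^2) / (2 * s^2))"
    by (simp only: prod.distrib prod_constant card_lessThan) (simp add: exp_sum)
  also have "(\<Sum>k<L. - ((y k - a k)^2) / (2 * s^2)) = - (\<Sum>i<L. (y i - a i)^2) / (2 * s^2)"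
    by (simp add: sum_divide_distrib[symmetric] sum_negf)
  also have "1 / sqrt (2 * pi * s^2) = (2 * pi * s^2) powr (- 1 / 2)"
    using assms by (simp add: powr_half_sqrt[symmetric] powr_minus_divide)
  finally show ?thesis
    using assms by (simp add: powr_power)
qed

lemma has_bochner_integral_normal_prod_density_prod:
  assumes "\<And>k. k < L \<Longrightarrow> has_bochner_integral lborel (\<lambda>z. normal_density (a k) s z * f k z) (c k)"
  shows "has_bochner_integral (obs_space L)
    (\<lambda>y. normal_prod_density L s a y * (\<Prod>k<L. f k (y k))) (\<Prod>k<L. c k)"
proof -
  interpret product_sigma_finite "\<lambda>_::nat. lborel::real measure"
    by (simp add: product_sigma_finite_def lborel.sigma_finite_measure_axioms)
  let ?h = "\<lambda>k z. normal_density (a k) s z * f k z"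
  have int: "\<And>k. k \<in> {..<L} \<Longrightarrow> integrable lborel (?h k)"
    using integrable.intros[OF assms] by simp
  have "integrable (obs_space L) (\<lambda>y. \<Prod>k\<in>{..<L}. ?h k (y k))"
    unfolding obs_space_def by (rule product_integrable_prod[where f="?h"]) (use int in auto)
  moreover have "(\<integral>y. (\<Prod>k\<in>{..<L}. ?h k (y k)) \<partial>obs_space L) = (\<Prod>k<L. c k)"
    unfolding obs_space_def
    using int has_bochner_integral_integral_eq[OF assms]
    by (subst product_integral_prod[where f="?h"]) (auto intro: prod.cong)
  moreover have "(\<lambda>y. \<Prod>k\<in>{..<L}. ?h k (y k))
      = (\<lambda>y. normal_prod_density L s a y * (\<Prod>k<L. f k (y k)))"
    by (simp add: normal_prod_density_def prod.distrib)
  ultimately show ?thesis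
    by (metis has_bochner_integral_iff)
qed

lemma has_bochner_integral_normal_prod_density_marginal:
  assumes "0 < s" and "i < L"
    and "has_bochner_integral lborel (\<lambda>z. normal_density (a i) s z * g z) c"
  shows "has_bochner_integral (obs_space L) (\<lambda>y. normal_prod_density L s a y * g (y i)) c"
proof -
  let ?f = "\<lambda>k. if k = i then g else (\<lambda>_. 1)"
  have "has_bochner_integral (obs_space L)
      (\<lambda>y. normal_prod_density L s a y * (\<Prod>k<L. ?f k (y k))) (\<Prod>k<L. if k = i then c else 1)"
    using assms(3) normal_moment_nz_0[OF assms(1)]
    by (intro has_bochner_integral_normal_prod_density_prod) auto
  moreover have "(\<Prod>k<L. ?f k (y k)) = g (y i)" for y
  proof -
    have "(\<Prod>k<L. ?f k (y k)) = (\<Prod>k<L. if k = i then g (y k) else 1)"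
      by (intro prod.cong) auto
    then show ?thesis using assms(2) by simp
  qed
  ultimately show ?thesis
    using assms(2) by simp
qed

lemma has_bochner_integral_normal_prod_density_marginal2:
  assumes "0 < s" and "i < L" and "j < L" and "i \<noteq> j"
    and "has_bochner_integral lborel (\<lambda>z. normal_density (a i) s z * g z) c"
    and "has_bochner_integral lborel (\<lambda>z. normal_density (a j) s z * h z) d"
  shows "has_bochner_integral (obs_space L)
    (\<lambda>y. normal_prod_density L s a y * (g (y i) * h (y j))) (c * d)"
proof -
  let ?f = "\<lambda>k. if k = i then g else if k = j then h else (\<lambda>_. 1)"
  have "has_bochner_integral (obs_space L)
      (\<lambda>y. normal_prod_density L s a y * (\<Prod>k<L. ?f k (y k)))
      (\<Prod>k<L. if k = i then c else if k = j then d else 1)"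
    using assms(5,6) normal_moment_nz_0[OF assms(1)]
    by (intro has_bochner_integral_normal_prod_density_prod) auto
  moreover have "(\<Prod>k<L. ?f k (y k)) = g (y i) * h (y j)" for y
  proof -
    have "(\<Prod>k<L. ?f k (y k)) = (\<Prod>k<L. (if k = i then g (y k) else 1) * (if k = j then h (y k) else 1))"
      using assms(4) by (intro prod.cong) auto
    then show ?thesis using assms(2,3) by (simp add: prod.distrib)
  qed
  moreover have "(\<Prod>k<L. if k = i then c else if k = j then d else 1) = c * d"
  proof -
    have "(\<Prod>k<L. if k = i then c else if k = j then d else 1)
        = (\<Prod>k<L. (if k = i then c else 1) * (if k = j then d else 1))"
      using assms(4) by (intro prod.cong) auto
    then show ?thesis using assms(2,3) by (simp add: prod.distrib)
  qed
  ultimately show ?thesis by simp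
qed

lemma normal_prod_density_second_moment:
  assumes "0 < s" and "i < L" and "j < L"
  shows "has_bochner_integral (obs_space L)
    (\<lambda>y. normal_prod_density L s a y * (y i * y j)) (a i * a j + (if i = j then s^2 else 0))"
proof (cases "i = j")
  case True
  then show ?thesis
    using has_bochner_integral_normal_prod_density_marginal[OF assms(1,2) normal_moment_nz_2[OF assms(1)]]
    by (simp add: power2_eq_square)
next
  case False
  then show ?thesis
    using has_bochner_integral_normal_prod_density_marginal2[OF assms False
        normal_moment_nz_1[OF assms(1)] normal_moment_nz_1[OF assms(1)]]
    by simp
qed

lemma mra_density_eq_mean:
  assumes "0 < s"
  shows "mra_density L s \<theta> y = (\<Sum>g<L. normal_prod_density L s (shift L g \<theta>) y) / real L"
  unfolding mra_density_def normal_prod_density_eq[OF assms] by simp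

lemma has_bochner_integral_mra_density_mult:
  assumes "0 < s"
    and "\<And>g. g < L \<Longrightarrow>
      has_bochner_integral (obs_space L) (\<lambda>y. normal_prod_density L s (shift L g \<theta>) y * f y) (v g)"
  shows "has_bochner_integral (obs_space L) (\<lambda>y. mra_density L s \<theta> y * f y) ((\<Sum>g<L. v g) / real L)"
proof -
  have "has_bochner_integral (obs_space L)
      (\<lambda>y. (\<Sum>g<L. normal_prod_density L s (shift L g \<theta>) y * f y) / real L) ((\<Sum>g<L. v g) / real L)"
    using assms(2) by (intro has_bochner_integral_divide_zero has_bochner_integral_sum) auto
  then show ?thesis
    by (simp add: mra_density_eq_mean[OF assms(1)] sum_distrib_right)
qed

lemma mra_density_integral:
  assumes "0 < s" and "1 \<le> L"
  shows "has_bochner_integral (obs_space L) (mra_density L s \<theta>) 1"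
proof -
  have "has_bochner_integral (obs_space L) (\<lambda>y. mra_density L s \<theta> y * 1) ((\<Sum>g<L. 1) / real L)"
    using has_bochner_integral_normal_prod_density_prod[of L _ s "\<lambda>_ _. 1" "\<lambda>_. 1"]
      normal_moment_nz_0[OF assms(1)]
    by (intro has_bochner_integral_mra_density_mult[OF assms(1)]) simp
  then show ?thesis using assms(2) by simp
qed

lemma mra_density_second_moment:
  assumes "0 < s" and "1 \<le> L" and "i < L" and "j < L"
  shows "has_bochner_integral (obs_space L) (\<lambda>y. mra_density L s \<theta> y * (y i * y j))
    (moment2 L \<theta> i j + (if i = j then s^2 else 0))"
proof -
  have "has_bochner_integral (obs_space L) (\<lambda>y. mra_density L s \<theta> y * (y i * y j))
     ((\<Sum>g<L. shift L g \<theta> i * shift L g \<theta> j + (if i = j then s^2 else 0)) / real L)"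
    using assms by (intro has_bochner_integral_mra_density_mult normal_prod_density_second_moment)
  also have "(\<Sum>g<L. shift L g \<theta> i * shift L g \<theta> j + (if i = j then s^2 else 0)) / real L
      = moment2 L \<theta> i j + (if i = j then s^2 else 0)"
    using assms(2) by (simp add: moment2_def sum.distrib field_simps)
  finally show ?thesis .
qed

lemma mra_density_quadratic_form:
  assumes "0 < s" and "1 \<le> L"
  shows "has_bochner_integral (obs_space L)
    (\<lambda>y. mra_density L s \<theta> y * (\<Sum>i<L. \<Sum>j<L. D i j * (y i * y j)))
    (\<Sum>i<L. \<Sum>j<L. D i j * (moment2 L \<theta> i j + (if i = j then s^2 else 0)))"
proof -
  have "has_bochner_integral (obs_space L)
      (\<lambda>y. \<Sum>i<L. \<Sum>j<L. D i j * (mra_density L s \<theta> y * (y i * y j)))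
      (\<Sum>i<L. \<Sum>j<L. D i j * (moment2 L \<theta> i j + (if i = j then s^2 else 0)))"
    using assms
    by (intro has_bochner_integral_sum has_bochner_integral_mult_right mra_density_second_moment) auto
  then show ?thesis
    by (simp add: sum_distrib_left mult.left_commute)
qed

lemma sq_shift_le_sqnorm:
  assumes "i < L"
  shows "(shift L g \<theta> i)^2 \<le> sqnorm L \<theta>"
proof -
  have "(\<theta> ((i + g) mod L))^2 \<le> (\<Sum>k<L. (\<theta> k)^2)"
    using assms by (intro member_le_sum) auto
  then show ?thesis
    using assms by (simp add: shift_def sqnorm_def)
qed

lemma normal_fourth_moment_le:
  fixes a s B :: real
  assumes "a^2 \<le> B" and "1 \<le> s"
  shows "a^4 + 6 * a^2 * s^2 + 3 * s^4 \<le> (B^2 + 6 * B + 3) * s^4"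
proof -
  have s2: "1 \<le> s^2" and s4: "s^2 \<le> s^4"
    using assms(2) power_increasing[of 2 4 s] by simp_all
  have "a^4 = (a^2)^2" by simp
  also have "\<dots> \<le> B^2" using assms(1) by (intro power_mono) auto
  also have "\<dots> \<le> B^2 * s^4" using mult_left_mono[of 1 "s^4" "B^2"] s2 s4 by simp
  finally have "a^4 \<le> B^2 * s^4" .
  moreover have "a^2 * s^2 \<le> B * s^4"
    using assms(1) s2 s4 by (meson mult_mono order_trans zero_le_power2 zero_le_one)
  ultimately show ?thesis by (simp add: algebra_simps)
qed

lemma mra_density_fourth_moment:
  assumes "1 \<le> s" and "1 \<le> L" and "i < L" and "sqnorm L \<theta> \<le> B"
  shows "integrable (obs_space L) (\<lambda>y. mra_density L s \<theta> y * (y i)^4)"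
    and "(\<integral>y. mra_density L s \<theta> y * (y i)^4 \<partial>obs_space L) \<le> (B^2 + 6 * B + 3) * s^4"
proof -
  have s: "0 < s" using assms(1) by simp
  have h: "has_bochner_integral (obs_space L) (\<lambda>y. mra_density L s \<theta> y * (y i)^4)
     ((\<Sum>g<L. (shift L g \<theta> i)^4 + 6 * (shift L g \<theta> i)^2 * s^2 + 3 * s^4) / real L)"
    using s assms(3)
    by (intro has_bochner_integral_mra_density_mult has_bochner_integral_normal_prod_density_marginal
        normal_moment_nz_4)
  then show "integrable (obs_space L) (\<lambda>y. mra_density L s \<theta> y * (y i)^4)" ..
  have "(\<Sum>g<L. (shift L g \<theta> i)^4 + 6 * (shift L g \<theta> i)^2 * s^2 + 3 * s^4) / real L
      \<le> (\<Sum>g<L. (B^2 + 6 * B + 3) * s^4) / real L"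
    using assms
    by (intro divide_right_mono sum_mono normal_fourth_moment_le order_trans[OF sq_shift_le_sqnorm]) auto
  also have "\<dots> = (B^2 + 6 * B + 3) * s^4" using assms(2) by simp
  finally show "(\<integral>y. mra_density L s \<theta> y * (y i)^4 \<partial>obs_space L) \<le> (B^2 + 6 * B + 3) * s^4"
    using has_bochner_integral_integral_eq[OF h] by simp
qed

lemma mra_density_pair_sum_fourth_moment:
  assumes "1 \<le> s" and "1 \<le> L" and "sqnorm L \<theta> \<le> B" and "sqnorm L \<phi> \<le> B"
  obtains I where "has_bochner_integral (obs_space L)
      (\<lambda>y. (mra_density L s \<theta> y + mra_density L s \<phi> y) * (\<Sum>i<L. (y i)^4)) I"
    and "I \<le> 2 * real L * (B^2 + 6 * B + 3) * s^4"
proof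
  note moment\<^sub>\<theta> = mra_density_fourth_moment[OF assms(1,2) _ assms(3)]
    and moment\<^sub>\<phi> = mra_density_fourth_moment[OF assms(1,2) _ assms(4)]
  let ?I = "\<lambda>\<psi> i. \<integral>y. mra_density L s \<psi> y * (y i)^4 \<partial>obs_space L"
  show "has_bochner_integral (obs_space L)
      (\<lambda>y. (mra_density L s \<theta> y + mra_density L s \<phi> y) * (\<Sum>i<L. (y i)^4)) (\<Sum>i<L. ?I \<theta> i + ?I \<phi> i)"
    unfolding sum_distrib_left distrib_right using moment\<^sub>\<theta>(1) moment\<^sub>\<phi>(1)
    by (intro has_bochner_integral_sum has_bochner_integral_add has_bochner_integral_integrable) auto
  have "(\<Sum>i<L. ?I \<theta> i + ?I \<phi> i) \<le> (\<Sum>i<L. (B^2 + 6 * B + 3) * s^4 + (B^2 + 6 * B + 3) * s^4)"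
    using moment\<^sub>\<theta>(2) moment\<^sub>\<phi>(2) by (intro sum_mono add_mono) auto
  also have "\<dots> = 2 * real L * (B^2 + 6 * B + 3) * s^4"
    by (simp add: algebra_simps)
  finally show "(\<Sum>i<L. ?I \<theta> i + ?I \<phi> i) \<le> 2 * real L * (B^2 + 6 * B + 3) * s^4" .
qed

lemma mra_density_measurable[measurable]: "mra_density L s \<theta> \<in> borel_measurable (obs_space L)"
  unfolding obs_space_def mra_density_def shift_def by measurable

lemma mra_density_pos:
  assumes "0 < s" and "1 \<le> L"
  shows "0 < mra_density L s \<theta> y"
  using assms unfolding mra_density_def by (intro mult_pos_pos sum_pos) (auto simp: lessThan_empty_iff)

lemma sq_diff_le:
  fixes y a b B :: real
  assumes "a^2 \<le> B" and "b^2 \<le> B"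
  shows "(y - b)^2 \<le> (y - a)^2 + y^2 + 5 * B"
proof -
  have "(y - b)^2 - (y - a)^2 - y^2 = a^2 + 3 * b^2 - (y - (a - b))^2 - (a + b)^2"
    by (simp add: power2_eq_square algebra_simps)
  also have "\<dots> \<le> 5 * B"
    using assms zero_le_power2[of a] zero_le_power2[of "y - (a - b)"] zero_le_power2[of "a + b"]
    by linarith
  finally show ?thesis by simp
qed

lemma normal_prod_density_le_exp_mult:
  assumes "0 < s" and "\<And>i. i < L \<Longrightarrow> (a i)^2 \<le> B" and "\<And>i. i < L \<Longrightarrow> (b i)^2 \<le> B"
  shows "normal_prod_density L s a y
    \<le> exp (((\<Sum>i<L. (y i)^2) + 5 * real L * B) / (2 * s^2)) * normal_prod_density L s b y"
proof -
  have "(\<Sum>i<L. (y i - b i)^2) \<le> (\<Sum>i<L. (y i - a i)^2 + (y i)^2 + 5 * B)"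
    using assms by (intro sum_mono sq_diff_le) auto
  then have "exp (- (\<Sum>i<L. (y i - a i)^2) / (2 * s^2))
      \<le> exp (((\<Sum>i<L. (y i)^2) + 5 * real L * B) / (2 * s^2)) * exp (- (\<Sum>i<L. (y i - b i)^2) / (2 * s^2))"
    using assms(1) by (simp add: exp_add[symmetric] sum.distrib divide_simps)
  then show ?thesis
    unfolding normal_prod_density_eq[OF assms(1)] by (simp add: mult_left_mono mult.left_commute)
qed

lemma mra_density_le_exp_mult:
  assumes "0 < s" and "1 \<le> L" and "sqnorm L \<theta> \<le> B" and "sqnorm L \<phi> \<le> B"
  shows "mra_density L s \<theta> y \<le> exp (((\<Sum>i<L. (y i)^2) + 5 * real L * B) / (2 * s^2)) * mra_density L s \<phi> y"
proof -
  define E where "E = exp (((\<Sum>i<L. (y i)^2) + 5 * real L * B) / (2 * s^2))"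
  have term_le: "normal_prod_density L s (shift L g \<theta>) y \<le> E * normal_prod_density L s (shift L h \<phi>) y"
    for g h
    unfolding E_def using assms
    by (intro normal_prod_density_le_exp_mult order_trans[OF sq_shift_le_sqnorm]) auto
  have "normal_prod_density L s (shift L g \<theta>) y \<le> E * mra_density L s \<phi> y" for g
  proof -
    have "normal_prod_density L s (shift L g \<theta>) y = (\<Sum>h<L. normal_prod_density L s (shift L g \<theta>) y) / real L"
      using assms(2) by simp
    also have "\<dots> \<le> (\<Sum>h<L. E * normal_prod_density L s (shift L h \<phi>) y) / real L"
      by (intro divide_right_mono sum_mono term_le) auto
    finally show ?thesis
      by (simp add: mra_density_eq_mean[OF assms(1)] sum_distrib_left)
  qed
  then have "(\<Sum>g<L. normal_prod_density L s (shift L g \<theta>) y) / real L \<le> (\<Sum>g<L. E * mra_density L s \<phi> y) / real L"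
    by (intro divide_right_mono sum_mono) auto
  then show ?thesis
    using assms(2) by (simp add: mra_density_eq_mean[OF assms(1)] E_def)
qed

lemma abs_ln_mra_density_ratio_le:
  assumes "0 < s" and "1 \<le> L" and "sqnorm L \<theta> \<le> B" and "sqnorm L \<phi> \<le> B"
  shows "\<bar>ln (mra_density L s \<theta> y / mra_density L s \<phi> y)\<bar> \<le> ((\<Sum>i<L. (y i)^2) + 5 * real L * B) / (2 * s^2)"
proof -
  define A where "A = ((\<Sum>i<L. (y i)^2) + 5 * real L * B) / (2 * s^2)"
  have ln_le: "ln (mra_density L s \<theta>' y / mra_density L s \<phi>' y) \<le> A"
    if "sqnorm L \<theta>' \<le> B" "sqnorm L \<phi>' \<le> B" for \<theta>' \<phi>'
  proof -
    have "mra_density L s \<theta>' y / mra_density L s \<phi>' y \<le> exp A"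
      using mra_density_le_exp_mult[OF assms(1,2) that, of y] mra_density_pos[OF assms(1,2)]
      by (simp add: A_def divide_le_eq)
    then show ?thesis
      using mra_density_pos[OF assms(1,2)] by (metis divide_pos_pos exp_gt_zero ln_exp ln_le_cancel_iff)
  qed
  have "ln (mra_density L s \<phi> y / mra_density L s \<theta> y) = - ln (mra_density L s \<theta> y / mra_density L s \<phi> y)"
    using mra_density_pos[OF assms(1,2)] by (simp add: ln_div)
  then show ?thesis
    using ln_le[OF assms(3,4)] ln_le[OF assms(4,3)] unfolding A_def by linarith
qed

lemma integrable_mra_density_mult_ln:
  assumes "0 < s" and "1 \<le> L" and "sqnorm L \<theta> \<le> B" and "sqnorm L \<phi> \<le> B"
  shows "integrable (obs_space L)
    (\<lambda>y. mra_density L s \<theta> y * ln (mra_density L s \<theta> y / mra_density L s \<phi> y))"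
proof (rule Bochner_Integration.integrable_bound)
  let ?P = "mra_density L s \<theta>"
  show "integrable (obs_space L) (\<lambda>y. (\<Sum>i<L. ?P y * (y i * y i)) / (2 * s^2) + 5 * real L * B / (2 * s^2) * ?P y)"
    using integrable.intros[OF mra_density_second_moment[OF assms(1,2)]]
      integrable.intros[OF mra_density_integral[OF assms(1,2)]]
    by (intro Bochner_Integration.integrable_add integrable_divide integrable_sum integrable_mult_right) auto
  show "(\<lambda>y. ?P y * ln (?P y / mra_density L s \<phi> y)) \<in> borel_measurable (obs_space L)"
    by measurable
  show "AE y in obs_space L. norm (?P y * ln (?P y / mra_density L s \<phi> y))
      \<le> norm ((\<Sum>i<L. ?P y * (y i * y i)) / (2 * s^2) + 5 * real L * B / (2 * s^2) * ?P y)"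
  proof (rule AE_I2)
    fix y
    have "norm (?P y * ln (?P y / mra_density L s \<phi> y)) = ?P y * \<bar>ln (?P y / mra_density L s \<phi> y)\<bar>"
      using mra_density_pos[OF assms(1,2), of \<theta> y] by (simp add: abs_mult)
    also have "\<dots> \<le> ?P y * (((\<Sum>i<L. (y i)^2) + 5 * real L * B) / (2 * s^2))"
      using abs_ln_mra_density_ratio_le[OF assms, of y] mra_density_pos[OF assms(1,2), of \<theta> y]
      by (intro mult_left_mono) auto
    also have "\<dots> = (\<Sum>i<L. ?P y * (y i * y i)) / (2 * s^2) + 5 * real L * B / (2 * s^2) * ?P y"
      by (simp add: sum_distrib_left power2_eq_square add_divide_distrib algebra_simps)
    finally show "norm (?P y * ln (?P y / mra_density L s \<phi> y))
      \<le> norm ((\<Sum>i<L. ?P y * (y i * y i)) / (2 * s^2) + 5 * real L * B / (2 * s^2) * ?P y)"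
      using abs_ge_self order_trans unfolding real_norm_def by blast
  qed
qed

lemma exp_le_quadratic:
  fixes t :: real
  assumes "t \<le> 1"
  shows "exp t \<le> 1 + t + t^2"
proof (cases "0 \<le> t")
  case True
  then show ?thesis using exp_bound[OF True assms] by simp
next
  case False
  define u where "u = - t"
  have u: "0 \<le> u" using False by (simp add: u_def)
  have lower: "0 < 1 + u + u^2 / 2" "1 + u + u^2 / 2 \<le> exp u"
    using u exp_lower_Taylor_quadratic[OF u] by (simp_all add: add_pos_nonneg)
  have "(1 - u + u^2) * (1 + u + u^2 / 2) = 1 + (u^2 + u^3 + u^4) / 2"
    by (simp add: field_simps power2_eq_square power3_eq_cube eval_nat_numeral)
  also have "\<dots> \<ge> 1" using u by simp
  finally have key: "1 \<le> (1 - u + u^2) * (1 + u + u^2 / 2)" .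
  have "exp t = 1 / exp u" by (simp add: u_def exp_minus divide_inverse)
  also have "\<dots> \<le> 1 / (1 + u + u^2 / 2)" using lower by (intro divide_left_mono) auto
  also have "\<dots> \<le> 1 - u + u^2" using key lower(1) by (simp add: divide_le_eq mult.commute)
  finally show ?thesis by (simp add: u_def)
qed

lemma mult_ln_div_ge_variational:
  fixes p q f :: real
  assumes "0 < p" and "0 < q"
  shows "p * f + p - q * exp f \<le> p * ln (p / q)"
proof -
  define r where "r = p / (q * exp f)"
  have r: "0 < r" using assms by (simp add: r_def)
  have "p * (1 - 1 / r) \<le> p * ln r"
    using ln_le_minus_one[of "1 / r"] r assms(1) by (intro mult_left_mono) (simp_all add: ln_div)
  moreover have "p * ln (p / q) = p * f + p * ln r"
    using assms by (simp add: r_def ln_div ln_mult algebra_simps)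
  ultimately show ?thesis
    using assms by (simp add: r_def algebra_simps)
qed

lemma mult_ln_div_ge_quadratic:
  fixes p q t :: real
  assumes "0 < p" and "0 < q"
  shows "p * (t - t^2) + p - q * (1 + t + t^2) \<le> p * ln (p / q)"
proof -
  define f where "f = min t 1"
  consider "t \<le> 1" | "1 < t" by linarith
  then have "t - t^2 \<le> f \<and> exp f \<le> 1 + t + t^2"
  proof cases
    case 1
    then show ?thesis using exp_le_quadratic[OF 1] by (simp add: f_def)
  next
    case 2
    then have "t \<le> t^2"
      using mult_left_mono[of 1 t t] by (simp add: power2_eq_square)
    moreover have "exp 1 \<le> (3::real)" by (rule exp_le)
    ultimately show ?thesis using 2 by (simp add: f_def)
  qed
  then have "p * (t - t^2) \<le> p * f" and "q * exp f \<le> q * (1 + t + t^2)"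
    using assms by (simp_all add: mult_left_mono)
  then have "p * (t - t^2) + p - q * (1 + t + t^2) \<le> p * f + p - q * exp f"
    by linarith
  also have "\<dots> \<le> p * ln (p / q)" by (rule mult_ln_div_ge_variational[OF assms])
  finally show ?thesis .
qed

lemma integral_mult_ln_div_ge:
  fixes P Q X V :: "'a \<Rightarrow> real"
  assumes "\<And>y. 0 < P y" and "\<And>y. 0 < Q y"
    and "has_bochner_integral M P 1" and "has_bochner_integral M Q 1"
    and "integrable M (\<lambda>y. P y * ln (P y / Q y))"
    and "has_bochner_integral M (\<lambda>y. P y * X y) a" and "has_bochner_integral M (\<lambda>y. Q y * X y) b"
    and "\<And>y. (P y + Q y) * (X y)^2 \<le> V y" and "has_bochner_integral M V c"
  shows "lam * (a - b) - lam^2 * c \<le> (\<integral>y. P y * ln (P y / Q y) \<partial>M)"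
proof -
  let ?G = "\<lambda>y. lam * (P y * X y - Q y * X y) + P y - Q y - lam^2 * V y"
  have G: "has_bochner_integral M ?G (lam * (a - b) + 1 - 1 - lam^2 * c)"
    using assms(3,4,6,7,9)
    by (intro has_bochner_integral_diff has_bochner_integral_add has_bochner_integral_mult_right)
  have "?G y \<le> P y * ln (P y / Q y)" for y
  proof -
    have "lam^2 * ((P y + Q y) * (X y)^2) \<le> lam^2 * V y"
      using assms(8) by (intro mult_left_mono) auto
    then have "?G y \<le> P y * (lam * X y - (lam * X y)^2) + P y - Q y * (1 + lam * X y + (lam * X y)^2)"
      by (simp add: algebra_simps)
    also have "\<dots> \<le> P y * ln (P y / Q y)"
      by (rule mult_ln_div_ge_quadratic[OF assms(1,2)])
    finally show ?thesis .
  qed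
  then have "integral\<^sup>L M ?G \<le> (\<integral>y. P y * ln (P y / Q y) \<partial>M)"
    by (intro integral_mono integrable.intros[OF G] assms(5))
  then show ?thesis
    using has_bochner_integral_integral_eq[OF G] by simp
qed

lemma quadratic_form_sq_le:
  fixes D :: "nat \<Rightarrow> nat \<Rightarrow> real" and y :: "nat \<Rightarrow> real"
  shows "(\<Sum>i<L. \<Sum>j<L. D i j * (y i * y j))^2 \<le> (\<Sum>i<L. \<Sum>j<L. (D i j)^2) * (real L * (\<Sum>i<L. (y i)^4))"
proof -
  let ?A = "{..<L} \<times> {..<L}"
  have "(\<Sum>i<L. \<Sum>j<L. D i j * (y i * y j))^2
      = (\<Sum>x\<in>?A. D (fst x) (snd x) * (y (fst x) * y (snd x)))^2"
    by (simp add: sum.cartesian_product case_prod_beta')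
  also have "\<dots> \<le> (\<Sum>x\<in>?A. (D (fst x) (snd x))^2) * (\<Sum>x\<in>?A. (y (fst x) * y (snd x))^2)"
    by (rule Cauchy_Schwarz_ineq_sum)
  also have "(\<Sum>x\<in>?A. (y (fst x) * y (snd x))^2) = (\<Sum>i<L. (y i)^2) * (\<Sum>j<L. (y j)^2)"
    by (simp add: sum.cartesian_product case_prod_beta' power_mult_distrib sum_product)
  also have "(\<Sum>x\<in>?A. (D (fst x) (snd x))^2) = (\<Sum>i<L. \<Sum>j<L. (D i j)^2)"
    by (simp add: sum.cartesian_product case_prod_beta')
  also have "(\<Sum>i<L. (y i)^2) * (\<Sum>j<L. (y j)^2) = (\<Sum>i<L. (y i)^2)^2"
    by (simp add: power2_eq_square)
  also have "(\<Sum>i<L. (y i)^2)^2 \<le> real L * (\<Sum>i<L. (y i)^4)"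
    using sum_squared_le_sum_of_squares[of "\<lambda>i. (y i)^2" "{..<L}"]
    by (simp add: power_mult[symmetric] mult.commute)
  then have "(\<Sum>i<L. \<Sum>j<L. (D i j)^2) * (\<Sum>i<L. (y i)^2)^2
      \<le> (\<Sum>i<L. \<Sum>j<L. (D i j)^2) * (real L * (\<Sum>i<L. (y i)^4))"
    by (intro mult_left_mono) (auto intro!: sum_nonneg)
  finally show ?thesis .
qed

lemma moment2_quadratic_form_diff:
  "(\<Sum>i<L. \<Sum>j<L. (moment2 L \<theta> i j - moment2 L \<phi> i j) * (moment2 L \<theta> i j + c i j))
     - (\<Sum>i<L. \<Sum>j<L. (moment2 L \<theta> i j - moment2 L \<phi> i j) * (moment2 L \<phi> i j + c i j))
   = frob2_Delta2 L \<theta> \<phi>"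
  unfolding frob2_Delta2_def by (simp add: power2_eq_square algebra_simps flip: sum_subtractf)

lemma KL_mra_ge_quadratic:
  assumes "1 \<le> L" and "1 \<le> s" and "sqnorm L \<theta> \<le> B" and "sqnorm L \<phi> \<le> B"
  shows "lam * frob2_Delta2 L \<theta> \<phi>
      - lam^2 * frob2_Delta2 L \<theta> \<phi> * (2 * (real L)^2 * (B^2 + 6 * B + 3) * s^4) \<le> KL_mra L s \<theta> \<phi>"
proof -
  have s: "0 < s" using assms(2) by simp
  define P where "P = mra_density L s \<theta>"
  define Q where "Q = mra_density L s \<phi>"
  define D where "D i j = moment2 L \<theta> i j - moment2 L \<phi> i j" for i j
  define F where "F = frob2_Delta2 L \<theta> \<phi>"
  define X where "X y = (\<Sum>i<L. \<Sum>j<L. D i j * (y i * y j))" for y :: "nat \<Rightarrow> real"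
  define M where "M \<psi> = (\<Sum>i<L. \<Sum>j<L. D i j * (moment2 L \<psi> i j + (if i = j then s^2 else 0)))"
    for \<psi>
  define S where "S y = (\<Sum>i<L. (y i)^4)" for y :: "nat \<Rightarrow> real"
  define V where "V y = F * real L * ((P y + Q y) * S y)" for y
  have "0 \<le> F" unfolding F_def frob2_Delta2_def by (auto intro!: sum_nonneg)
  have P_pos: "0 < P y" and Q_pos: "0 < Q y" for y
    unfolding P_def Q_def using mra_density_pos[OF s assms(1)] by auto
  have X_sq: "(P y + Q y) * (X y)^2 \<le> V y" for y
  proof -
    have "(X y)^2 \<le> F * (real L * S y)"
      unfolding X_def F_def frob2_Delta2_def D_def[symmetric] S_def by (rule quadratic_form_sq_le)
    then have "(P y + Q y) * (X y)^2 \<le> (P y + Q y) * (F * (real L * S y))"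
      using P_pos[of y] Q_pos[of y] by (intro mult_left_mono) auto
    then show ?thesis by (simp add: V_def algebra_simps)
  qed
  obtain I where
    I: "has_bochner_integral (obs_space L) (\<lambda>y. (P y + Q y) * S y) I"
      "I \<le> 2 * real L * (B^2 + 6 * B + 3) * s^4"
    unfolding P_def Q_def S_def by (rule mra_density_pair_sum_fourth_moment[OF assms(2,1,3,4)])
  have V: "has_bochner_integral (obs_space L) V (F * real L * I)"
    unfolding V_def using I(1) by (rule has_bochner_integral_mult_right)
  from I(2) have "lam^2 * (F * real L * I) \<le> lam^2 * (F * real L * (2 * real L * (B^2 + 6 * B + 3) * s^4))"
    using \<open>0 \<le> F\<close> by (intro mult_left_mono) auto
  then have "lam * F - lam^2 * F * (2 * (real L)^2 * (B^2 + 6 * B + 3) * s^4)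
      \<le> lam * F - lam^2 * (F * real L * I)"
    by (simp add: power2_eq_square mult_ac)
  also have "\<dots> = lam * (M \<theta> - M \<phi>) - lam^2 * (F * real L * I)"
    using moment2_quadratic_form_diff[where c="\<lambda>i j. if i = j then s^2 else 0"]
    by (simp add: M_def D_def F_def)
  also have "\<dots> \<le> KL_mra L s \<theta> \<phi>"
    unfolding KL_mra_def P_def[symmetric] Q_def[symmetric]
    using P_pos Q_pos mra_density_integral[OF s assms(1)]
      integrable_mra_density_mult_ln[OF s assms(1,3,4)] X_sq V
      mra_density_quadratic_form[OF s assms(1), of _ D]
    by (intro integral_mult_ln_div_ge) (simp_all add: P_def Q_def X_def M_def)
  finally show ?thesis by (simp add: F_def)
qed

lemma KL_mra_ge_frob2_Delta2:
  assumes "1 \<le> L" and "1 \<le> s" and "sqnorm L \<theta> \<le> B" and "sqnorm L \<phi> \<le> B"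
  shows "frob2_Delta2 L \<theta> \<phi> / (8 * (real L)^2 * (B^2 + 6 * B + 3) * s^4) \<le> KL_mra L s \<theta> \<phi>"
proof -
  define K where "K = 2 * (real L)^2 * (B^2 + 6 * B + 3) * s^4"
  have "0 \<le> B" using assms(3) unfolding sqnorm_def by (meson order_trans sum_nonneg zero_le_power2)
  then have "0 < K" using assms(1,2) by (simp add: K_def add_nonneg_pos)
  have "frob2_Delta2 L \<theta> \<phi> / (4 * K)
      = 1 / (2 * K) * frob2_Delta2 L \<theta> \<phi> - (1 / (2 * K))^2 * frob2_Delta2 L \<theta> \<phi> * K"
    using \<open>0 < K\<close> by (simp add: field_simps power2_eq_square)
  also have "\<dots> \<le> KL_mra L s \<theta> \<phi>"
    unfolding K_def by (rule KL_mra_ge_quadratic[OF assms])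
  finally show ?thesis by (simp add: K_def mult_ac)
qed

theorem proposition2p4:
  fixes L :: nat and T :: "(nat \<Rightarrow> real) set"
  assumes "L \<ge> 1"
    and "\<exists>B. \<forall>\<theta>\<in>T. sqnorm L \<theta> \<le> B"
  shows "\<exists>C>0. \<exists>\<sigma>0>0. \<exists>\<delta>>0. \<forall>\<sigma>>\<sigma>0. \<forall>\<theta>\<in>T. \<forall>\<phi>\<in>T.
           rho L \<theta> \<phi> < \<delta> \<longrightarrow>
           KL_mra L \<sigma> \<theta> \<phi> \<ge> C * \<sigma> powr (-4) * frob2_Delta2 L \<theta> \<phi>"
proof -
  obtain B where B: "\<forall>\<theta>\<in>T. sqnorm L \<theta> \<le> B" "0 \<le> B"
    using assms(2) by (meson le_max_iff_disj max.cobounded2)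
  define C where "C = 1 / (8 * (real L)^2 * (B^2 + 6 * B + 3))"
  have "0 < C" using assms(1) B(2) by (simp add: C_def add_nonneg_pos)
  moreover have "C * \<sigma> powr (-4) * frob2_Delta2 L \<theta> \<phi> \<le> KL_mra L \<sigma> \<theta> \<phi>"
    if "1 < \<sigma>" "\<theta> \<in> T" "\<phi> \<in> T" for \<sigma> \<theta> \<phi>
    using KL_mra_ge_frob2_Delta2[OF assms(1), of \<sigma> \<theta> B \<phi>] that B(1)
    by (simp add: C_def powr_minus_divide)
  ultimately show ?thesis
    by (intro exI[of _ C] conjI exI[of _ "1::real"]) auto
qed

end
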